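(* Let $\ell:\mathcal{Z}\times\mathbb{R}^d\to[0,\infty)$ be a non-negative loss, differentiable in the parameter $\Theta\in\mathbb{R}^d$. Let $(p^t)_{t\ge0}$ and $p^*$ be probability densities on $\mathcal{Z}$, and set $c^t\triangleq\int|p^t(z)-p^*(z)|\,dz$. Define $\mathcal{L}(\Theta)\triangleq\mathbb{E}_{Z\sim p^*}[\ell(Z;\Theta)]$. Consider the iteration $$\Theta^{t+1}=\Theta^t-\eta_t\nabla_{\Theta}\ell(Z^t;\Theta^t),$$ where $\eta_t>0$, $\Theta^0$ is an initial (possibly random) parameter, and, conditionally on the past $(\Theta^0,Z^0,\dots,Z^{t-1})$, $Z^t$ has density $p^t$. Assume: (A1) $\mathcal{L}$ is differentiable and $\nabla\mathcal{L}$ is $L$-Lipschitz; (A2) $\sum_t\eta_t=\infty$ and $\sum_t\eta_t^2<\infty$; (A3) there is $G>0$ such that for all $t$ and all $\Theta$, $\mathbb{E}_{Z\sim p^t}\big[\Vert\nabla_{\Theta}\ell(Z;\Theta)\Vert^2\big]\le G$; (A4) $\sum_t c^t<\infty$. Then for every $T$, $$\sum_{t=0}^T\eta_t\,\mathbb{E}\big[\Vert\nabla\mathcal{L}(\Theta^t)\Vert^2\big]\le\mathbb{E}[\mathcal{L}(\Theta^0)]+G\sum_{t=0}^T\eta_t\Big(\sqrt{2c^t}+\frac{L\eta_t}{2}\Big),$$ and each term of this inequality converges as $T\to\infty$.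
   Context: This is the setting of a single module $j>1$ in a layer-wise ("greedy") training scheme trained in parallel with the preceding modules: $p^t$ is the time-varying density of the input sample fed to the module at step $t$, $p^*$ is the density of the previous module's output at convergence, and $\Theta$ collects the module's parameters and those of its auxiliary network. Expectations without subscript are over all random variables. *)

theory Defs
  imports "HOL-Probability.Probability"
begin

end

theory Submission
  imports Defs
begin

text \<open>
  Write \<open>g t = gl (Z t) (\<Theta> t)\<close> for the stochastic gradient. The iterate \<open>\<Theta> t\<close> is a
  measurable function of \<open>\<Theta> 0, Z 0, \<dots>, Z (t - 1)\<close>, so the sampling hypothesis makes \<open>Z t\<close>
  independent of \<open>\<Theta> t\<close> with density \<open>p t\<close>, and expectations of \<open>g t\<close> may be computed by first
  integrating over \<open>z\<close> against \<open>p t\<close>. The descent lemma for the \<open>Lc\<close>-smooth objective then gives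
  \<open>E L(\<Theta> (t+1)) \<le> E L(\<Theta> t) - \<eta> t E(\<nabla>L(\<Theta> t) \<bullet> g t) + Lc \<eta> t\<^sup>2 G / 2\<close>.

  The stochastic gradient is biased. Differentiating under the integral (justified by the
  \<open>L\<^sup>2\<close> bound on \<open>gl\<close>) identifies \<open>\<nabla>L \<theta>\<close> with the \<open>p\<^sup>*\<close>-mean of \<open>gl z \<theta>\<close>, and also gives
  \<open>\<parallel>\<nabla>L\<parallel>\<^sup>2 \<le> G\<close>. The second-moment bound \<open>G\<close> holds under \<open>p\<^sup>*\<close> as well, by Fatou along an
  a.e. convergent subsequence of \<open>p t \<rightarrow> p\<^sup>*\<close> in \<open>L\<^sup>1\<close>. Cauchy-Schwarz with weight
  \<open>\<bar>p t - p\<^sup>*\<bar>\<close> then bounds the difference of the \<open>p t\<close>- and \<open>p\<^sup>*\<close>-means of \<open>\<nabla>L \<theta> \<bullet> gl z \<theta>\<close>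
  by \<open>G sqrt (2 c t)\<close>, so \<open>E(\<nabla>L(\<Theta> t) \<bullet> g t) \<ge> E\<parallel>\<nabla>L(\<Theta> t)\<parallel>\<^sup>2 - G sqrt (2 c t)\<close>.

  Summing the one-step inequalities telescopes, and \<open>L \<ge> 0\<close> gives the bound. Its right-hand
  side converges because \<open>\<eta> t sqrt (2 c t) \<le> (\<eta> t\<^sup>2 + 2 c t) / 2\<close>; the left-hand side is a
  series of nonnegative terms with bounded partial sums.
\<close>

lemma Cauchy_Schwarz_integral:
  fixes f g :: "'a \<Rightarrow> real"
  assumes [measurable]: "f \<in> borel_measurable M" "g \<in> borel_measurable M"
    and f2: "integrable M (\<lambda>x. (f x)\<^sup>2)" and g2: "integrable M (\<lambda>x. (g x)\<^sup>2)"
  shows "integrable M (\<lambda>x. f x * g x)"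
    and "(\<integral>x. f x * g x \<partial>M)\<^sup>2 \<le> (\<integral>x. (f x)\<^sup>2 \<partial>M) * (\<integral>x. (g x)\<^sup>2 \<partial>M)"
proof -
  have "norm (f x * g x) \<le> norm (((f x)\<^sup>2 + (g x)\<^sup>2) / 2)" for x
  proof -
    have "2 * \<bar>f x\<bar> * \<bar>g x\<bar> \<le> \<bar>f x\<bar>\<^sup>2 + \<bar>g x\<bar>\<^sup>2" by (rule sum_squares_bound)
    then show ?thesis by (simp add: abs_mult)
  qed
  moreover have "integrable M (\<lambda>x. ((f x)\<^sup>2 + (g x)\<^sup>2) / 2)"
    using f2 g2 by (intro integrable_divide Bochner_Integration.integrable_add)
  ultimately show fg: "integrable M (\<lambda>x. f x * g x)"
    by (auto intro: Bochner_Integration.integrable_bound AE_I2)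
  have nn_sq: "(\<integral>\<^sup>+x. ennreal \<bar>h x\<bar> ^ 2 \<partial>M) = ennreal (\<integral>x. (h x)\<^sup>2 \<partial>M)"
    if "integrable M (\<lambda>x. (h x)\<^sup>2)" for h :: "'a \<Rightarrow> real"
  proof -
    have "(\<integral>\<^sup>+x. ennreal \<bar>h x\<bar> ^ 2 \<partial>M) = (\<integral>\<^sup>+x. ennreal ((h x)\<^sup>2) \<partial>M)"
      by (simp add: ennreal_power)
    also have "\<dots> = ennreal (\<integral>x. (h x)\<^sup>2 \<partial>M)"
      using that by (intro nn_integral_eq_integral) auto
    finally show ?thesis .
  qed
  have "(\<integral>\<^sup>+x. ennreal \<bar>f x\<bar> * ennreal \<bar>g x\<bar> \<partial>M) = (\<integral>\<^sup>+x. ennreal \<bar>f x * g x\<bar> \<partial>M)"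
    by (simp add: ennreal_mult abs_mult)
  also have "\<dots> = ennreal (\<integral>x. \<bar>f x * g x\<bar> \<partial>M)"
    using fg by (intro nn_integral_eq_integral) auto
  finally have "ennreal ((\<integral>x. \<bar>f x * g x\<bar> \<partial>M)\<^sup>2) = (\<integral>\<^sup>+x. ennreal \<bar>f x\<bar> * ennreal \<bar>g x\<bar> \<partial>M)\<^sup>2"
    by (simp add: ennreal_power)
  also have "\<dots> \<le> (\<integral>\<^sup>+x. ennreal \<bar>f x\<bar> ^ 2 \<partial>M) * (\<integral>\<^sup>+x. ennreal \<bar>g x\<bar> ^ 2 \<partial>M)"
    by (rule Cauchy_Schwarz_nn_integral) measurable
  also have "\<dots> = ennreal ((\<integral>x. (f x)\<^sup>2 \<partial>M) * (\<integral>x. (g x)\<^sup>2 \<partial>M))"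
    by (simp only: nn_sq[OF f2] nn_sq[OF g2] ennreal_mult integral_nonneg_AE zero_le_power2 AE_I2)
  finally have CS_abs: "(\<integral>x. \<bar>f x * g x\<bar> \<partial>M)\<^sup>2 \<le> (\<integral>x. (f x)\<^sup>2 \<partial>M) * (\<integral>x. (g x)\<^sup>2 \<partial>M)"
    by (rule ennreal_le_iff[THEN iffD1, rotated]) (simp add: integral_nonneg_AE)
  have "(\<integral>x. f x * g x \<partial>M)\<^sup>2 = \<bar>\<integral>x. f x * g x \<partial>M\<bar>\<^sup>2"
    by simp
  also have "\<dots> \<le> (\<integral>x. \<bar>f x * g x\<bar> \<partial>M)\<^sup>2"
    by (rule power_mono[OF integral_abs_bound]) simp
  finally show "(\<integral>x. f x * g x \<partial>M)\<^sup>2 \<le> (\<integral>x. (f x)\<^sup>2 \<partial>M) * (\<integral>x. (g x)\<^sup>2 \<partial>M)"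
    using CS_abs by linarith
qed

lemma integrable_power2_of_nn_integral_le:
  fixes f :: "'a \<Rightarrow> real"
  assumes [measurable]: "f \<in> borel_measurable M"
    and le: "(\<integral>\<^sup>+x. ennreal ((f x)\<^sup>2) \<partial>M) \<le> ennreal B" and B: "0 \<le> B"
  shows "integrable M (\<lambda>x. (f x)\<^sup>2)" and "(\<integral>x. (f x)\<^sup>2 \<partial>M) \<le> B"
proof -
  show sq: "integrable M (\<lambda>x. (f x)\<^sup>2)"
    using le by (intro integrableI_bounded) (auto simp: top.not_eq_extremum intro: le_less_trans)
  have "ennreal (\<integral>x. (f x)\<^sup>2 \<partial>M) = (\<integral>\<^sup>+x. ennreal ((f x)\<^sup>2) \<partial>M)"
    using sq by (simp add: nn_integral_eq_integral)
  with le B show "(\<integral>x. (f x)\<^sup>2 \<partial>M) \<le> B"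
    by (metis ennreal_le_iff)
qed

lemma nn_integral_inner_power2_le:
  fixes g :: "'a \<Rightarrow> 'b::euclidean_space"
  assumes [measurable]: "g \<in> borel_measurable M"
    and le: "(\<integral>\<^sup>+x. ennreal ((norm (g x))\<^sup>2) \<partial>M) \<le> ennreal G" and G: "0 \<le> G"
  shows "(\<integral>\<^sup>+x. ennreal ((g x \<bullet> u)\<^sup>2) \<partial>M) \<le> ennreal (G * (norm u)\<^sup>2)"
proof -
  have "(\<integral>\<^sup>+x. ennreal ((g x \<bullet> u)\<^sup>2) \<partial>M)
      \<le> (\<integral>\<^sup>+x. ennreal ((norm (g x))\<^sup>2) * ennreal ((norm u)\<^sup>2) \<partial>M)"
  proof (intro nn_integral_mono)
    fix x
    have "(g x \<bullet> u)\<^sup>2 \<le> (norm (g x) * norm u)\<^sup>2"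
      using Cauchy_Schwarz_ineq2[of "g x" u] by (metis abs_ge_zero power2_abs power_mono)
    then show "ennreal ((g x \<bullet> u)\<^sup>2) \<le> ennreal ((norm (g x))\<^sup>2) * ennreal ((norm u)\<^sup>2)"
      by (simp add: ennreal_mult[symmetric] power_mult_distrib ennreal_leI)
  qed
  also have "\<dots> = (\<integral>\<^sup>+x. ennreal ((norm (g x))\<^sup>2) \<partial>M) * ennreal ((norm u)\<^sup>2)"
    by (rule nn_integral_multc) measurable
  also have "\<dots> \<le> ennreal G * ennreal ((norm u)\<^sup>2)"
    using le by (rule mult_right_mono) simp
  also have "\<dots> = ennreal (G * (norm u)\<^sup>2)"
    using G by (simp add: ennreal_mult)
  finally show ?thesis .
qed

lemma integral_abs_tendsto_zero_of_L2_bounded: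
  fixes d :: "nat \<Rightarrow> 'a \<Rightarrow> real"
  assumes "finite_measure M"
    and [measurable]: "\<And>n. d n \<in> borel_measurable M"
    and lim: "\<And>x. x \<in> space M \<Longrightarrow> (\<lambda>n. d n x) \<longlonglongrightarrow> 0"
    and sq: "\<And>n. integrable M (\<lambda>x. (d n x)\<^sup>2)" and le: "\<And>n. (\<integral>x. (d n x)\<^sup>2 \<partial>M) \<le> B"
  shows "(\<lambda>n. \<integral>x. \<bar>d n x\<bar> \<partial>M) \<longlonglongrightarrow> 0"
proof (unfold LIMSEQ_iff, intro allI impI)
  interpret finite_measure M by fact
  fix r :: real
  assume r: "0 < r"
  have "0 \<le> (\<integral>x. (d 0 x)\<^sup>2 \<partial>M)"
    by (rule integral_nonneg_AE) simp
  with le[of 0] have B: "0 \<le> B"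
    by linarith
  define K where "K = 2 * (B + 1) / r"
  have K: "0 < K"
    using r B by (simp add: K_def)
  have BK: "B / K < r / 2"
    using r B by (simp add: K_def field_simps)
  txt \<open>Truncate at \<open>K\<close>: the bounded part vanishes by dominated convergence, the rest costs
    at most \<open>B / K\<close>.\<close>
  have split: "\<bar>y\<bar> \<le> min \<bar>y\<bar> K + y\<^sup>2 / K" for y :: real
  proof (cases "\<bar>y\<bar> \<le> K")
    case False
    then have "K * \<bar>y\<bar> \<le> \<bar>y\<bar> * \<bar>y\<bar>"
      by (intro mult_right_mono) auto
    then have "\<bar>y\<bar> \<le> y\<^sup>2 / K"
      using K by (simp add: field_simps power2_eq_square)
    then show ?thesis
      using K False by (simp add: min_def)
  qed (use K in \<open>simp add: min_def\<close>)
  have trunc_int: "integrable M (\<lambda>x. min \<bar>d n x\<bar> K)" for n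
    by (rule Bochner_Integration.integrable_bound[where f="\<lambda>x. K"]) (use K in auto)
  have "(\<lambda>n. \<integral>x. min \<bar>d n x\<bar> K \<partial>M) \<longlonglongrightarrow> (\<integral>x. 0 \<partial>M)"
  proof (rule integral_dominated_convergence[where w="\<lambda>x. K"])
    show "AE x in M. (\<lambda>n. min \<bar>d n x\<bar> K) \<longlonglongrightarrow> 0"
    proof (rule AE_I2)
      fix x
      assume "x \<in> space M"
      then have "(\<lambda>n. min \<bar>d n x\<bar> K) \<longlonglongrightarrow> min \<bar>0\<bar> K"
        by (intro tendsto_intros lim)
      then show "(\<lambda>n. min \<bar>d n x\<bar> K) \<longlonglongrightarrow> 0"
        using K by simp
    qed
  qed (use K in auto)
  from order_tendstoD(2)[OF this, of "r / 2"]
  have "\<forall>\<^sub>F n in sequentially. (\<integral>x. min \<bar>d n x\<bar> K \<partial>M) < r / 2"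
    using r by simp
  then obtain N where N: "\<And>n. N \<le> n \<Longrightarrow> (\<integral>x. min \<bar>d n x\<bar> K \<partial>M) < r / 2"
    by (auto simp: eventually_sequentially)
  show "\<exists>N. \<forall>n\<ge>N. norm ((\<integral>x. \<bar>d n x\<bar> \<partial>M) - 0) < r"
  proof (intro exI allI impI)
    fix n
    assume "N \<le> n"
    have int_d: "integrable M (\<lambda>x. \<bar>d n x\<bar>)"
      using square_integrable_imp_integrable[OF _ sq] by (intro integrable_abs) simp
    have int_bound: "integrable M (\<lambda>x. min \<bar>d n x\<bar> K + (d n x)\<^sup>2 / K)"
      using trunc_int sq by (intro Bochner_Integration.integrable_add integrable_divide)
    have "(\<integral>x. \<bar>d n x\<bar> \<partial>M) \<le> (\<integral>x. min \<bar>d n x\<bar> K + (d n x)\<^sup>2 / K \<partial>M)"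
      using int_d int_bound split by (rule integral_mono)
    also have "\<dots> = (\<integral>x. min \<bar>d n x\<bar> K \<partial>M) + (\<integral>x. (d n x)\<^sup>2 \<partial>M) / K"
      using trunc_int sq by (simp only: Bochner_Integration.integral_add integral_divide_zero integrable_divide)
    also have "\<dots> < r / 2 + B / K"
      using N[OF \<open>N \<le> n\<close>] divide_right_mono[OF le[of n], of K] K by linarith
    finally have "(\<integral>x. \<bar>d n x\<bar> \<partial>M) < r"
      using BK by linarith
    then show "norm ((\<integral>x. \<bar>d n x\<bar> \<partial>M) - 0) < r"
      by simp
  qed
qed

lemma nn_integral_density_le_of_L1_tendsto:
  fixes p :: "nat \<Rightarrow> 'a \<Rightarrow> real" and q w :: "'a \<Rightarrow> real"
  assumes [measurable]: "\<And>t. p t \<in> borel_measurable M" "q \<in> borel_measurable M"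
      "w \<in> borel_measurable M"
    and w: "\<And>x. 0 \<le> w x"
    and int: "\<And>t. integrable M (\<lambda>x. p t x - q x)"
    and conv: "(\<lambda>t. \<integral>x. \<bar>p t x - q x\<bar> \<partial>M) \<longlonglongrightarrow> 0"
    and le: "\<And>t. (\<integral>\<^sup>+x. w x \<partial>density M (p t)) \<le> C"
  shows "(\<integral>\<^sup>+x. w x \<partial>density M q) \<le> C"
proof -
  obtain r :: "nat \<Rightarrow> nat" where ae: "AE x in M. (\<lambda>n. p (r n) x - q x) \<longlonglongrightarrow> 0"
    using tendsto_L1_AE_subseq[of M "\<lambda>t x. p t x - q x"] int conv by auto
  have "AE x in M. (\<lambda>n. ennreal (p (r n) x * w x)) \<longlonglongrightarrow> ennreal (q x * w x)"
    using ae
  proof eventually_elim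
    case (elim x)
    then have "(\<lambda>n. p (r n) x - q x + q x) \<longlonglongrightarrow> 0 + q x"
      by (intro tendsto_add tendsto_const)
    then show ?case
      by (intro tendsto_ennrealI tendsto_mult tendsto_const) simp
  qed
  then have lim_ae: "AE x in M. ennreal (q x * w x) = liminf (\<lambda>n. ennreal (p (r n) x * w x))"
    by eventually_elim (simp add: lim_imp_Liminf)
  have "(\<integral>\<^sup>+x. w x \<partial>density M q) = (\<integral>\<^sup>+x. ennreal (q x * w x) \<partial>M)"
    using w by (simp add: nn_integral_density ennreal_mult'')
  also have "\<dots> = (\<integral>\<^sup>+x. liminf (\<lambda>n. ennreal (p (r n) x * w x)) \<partial>M)"
    by (rule nn_integral_cong_AE[OF lim_ae])
  also have "\<dots> \<le> liminf (\<lambda>n. \<integral>\<^sup>+x. ennreal (p (r n) x * w x) \<partial>M)"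
    by (rule nn_integral_liminf) simp
  also have "\<dots> \<le> C"
    using le w by (intro Liminf_le) (auto simp: nn_integral_density ennreal_mult'')
  finally show ?thesis .
qed

lemma has_real_derivative_along_line:
  fixes f :: "'a::real_inner \<Rightarrow> real"
  assumes "(f has_derivative (\<lambda>h. g \<bullet> h)) (at (x + s *\<^sub>R d))"
  shows "((\<lambda>s. f (x + s *\<^sub>R d)) has_real_derivative (g \<bullet> d)) (at s)"
proof -
  have "((\<lambda>s. x + s *\<^sub>R d) has_derivative (\<lambda>t. t *\<^sub>R d)) (at s)"
    by (auto intro!: derivative_eq_intros)
  from has_derivative_compose[OF this assms]
  have "((\<lambda>s. f (x + s *\<^sub>R d)) has_derivative (\<lambda>t. g \<bullet> (t *\<^sub>R d))) (at s)"
    by (simp add: o_def)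
  moreover have "(\<lambda>t. g \<bullet> (t *\<^sub>R d)) = (*) (g \<bullet> d)"
    by (auto simp: mult.commute)
  ultimately show ?thesis
    by (simp add: has_field_derivative_def)
qed

lemma descent_lemma:
  fixes f :: "'a::real_inner \<Rightarrow> real"
  assumes diff: "\<And>\<theta>. (f has_derivative (\<lambda>h. Df \<theta> \<bullet> h)) (at \<theta>)"
    and lip: "K-lipschitz_on UNIV Df"
  shows "f y \<le> f x + Df x \<bullet> (y - x) + K / 2 * (norm (y - x))\<^sup>2"
proof -
  define d where "d = y - x"
  define \<psi> where "\<psi> s = f (x + s *\<^sub>R d) - s * (Df x \<bullet> d) - K / 2 * s\<^sup>2 * (norm d)\<^sup>2" for s
  have "\<psi> 1 \<le> \<psi> 0"
  proof (rule DERIV_nonpos_imp_nonincreasing[of 0 1])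
    fix s :: real
    assume s: "0 \<le> s" "s \<le> 1"
    have D: "(\<psi> has_real_derivative
        (Df (x + s *\<^sub>R d) \<bullet> d - Df x \<bullet> d - K / 2 * (2 * s) * (norm d)\<^sup>2)) (at s)"
      unfolding \<psi>_def
      by (intro derivative_intros has_real_derivative_along_line diff)
        (auto intro!: derivative_eq_intros)
    have "(Df (x + s *\<^sub>R d) - Df x) \<bullet> d \<le> norm (Df (x + s *\<^sub>R d) - Df x) * norm d"
      by (rule norm_cauchy_schwarz)
    also have "\<dots> \<le> K * norm (s *\<^sub>R d) * norm d"
    proof (rule mult_right_mono)
      show "norm (Df (x + s *\<^sub>R d) - Df x) \<le> K * norm (s *\<^sub>R d)"
        using lip unfolding lipschitz_on_def dist_norm by (metis UNIV_I add_diff_cancel_left')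
    qed simp
    also have "\<dots> = K * s * (norm d)\<^sup>2"
      using s by (simp add: power2_eq_square)
    finally have "Df (x + s *\<^sub>R d) \<bullet> d - Df x \<bullet> d - K / 2 * (2 * s) * (norm d)\<^sup>2 \<le> 0"
      by (simp add: inner_diff_left)
    with D show "\<exists>y. (\<psi> has_real_derivative y) (at s) \<and> y \<le> 0"
      by blast
  qed simp
  then show ?thesis
    unfolding \<psi>_def d_def by simp
qed

lemma power2_increment_le_nn_integral_deriv:
  fixes F F' :: "real \<Rightarrow> real"
  assumes h: "0 < h" and D: "\<And>s. (F has_real_derivative F' s) (at s)"
    and [measurable]: "F' \<in> borel_measurable borel"
  shows "ennreal ((F h - F 0)\<^sup>2)
    \<le> ennreal h * (\<integral>\<^sup>+s. indicator {0..h} s * ennreal ((F' s)\<^sup>2) \<partial>lborel)"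
proof (cases "(\<integral>\<^sup>+s. indicator {0..h} s * ennreal ((F' s)\<^sup>2) \<partial>lborel) = \<infinity>")
  case True
  then show ?thesis
    using h by (simp add: ennreal_mult_top)
next
  case False
  define g where "g s = indicator {0..h} s * F' s" for s
  have [measurable]: "g \<in> borel_measurable borel"
    unfolding g_def by measurable
  have nn_g: "(\<integral>\<^sup>+s. indicator {0..h} s * ennreal ((F' s)\<^sup>2) \<partial>lborel) = (\<integral>\<^sup>+s. ennreal ((g s)\<^sup>2) \<partial>lborel)"
    by (intro nn_integral_cong) (simp add: g_def indicator_def)
  have g2: "integrable lborel (\<lambda>s. (g s)\<^sup>2)"
    using False nn_g by (intro integrableI_bounded) (simp_all add: top.not_eq_extremum)
  have ind2: "(indicator {0..h} s :: real)\<^sup>2 = indicator {0..h} s" for s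
    by (simp add: indicator_def)
  have int_ind: "integrable lborel (\<lambda>s. (indicator {0..h} s :: real)\<^sup>2)"
    unfolding ind2 using h by (intro integrable_real_indicator) auto
  note CS = Cauchy_Schwarz_integral[of "indicator {0..h}" lborel g, OF _ _ int_ind g2]
  have ind_g: "indicator {0..h} s * g s = g s" for s
    by (simp add: g_def indicator_def)
  have "set_integrable lborel {0..h} F'"
    using CS(1) unfolding set_integrable_def ind_g by (simp add: g_def)
  then have "(\<integral>s. g s \<partial>lborel) = integral {0..h} F'"
    by (simp add: set_borel_integral_eq_integral(2)[symmetric] set_lebesgue_integral_def g_def)
  also have "\<dots> = F h - F 0"
    using h D by (intro integral_unique fundamental_theorem_of_calculus)
      (auto simp: has_real_derivative_iff_has_vector_derivative intro: has_vector_derivative_at_within)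
  finally have "(F h - F 0)\<^sup>2 \<le> (\<integral>s. (indicator {0..h} s :: real)\<^sup>2 \<partial>lborel) * (\<integral>s. (g s)\<^sup>2 \<partial>lborel)"
    using CS(2) by (simp add: ind_g)
  also have "\<dots> = h * (\<integral>s. (g s)\<^sup>2 \<partial>lborel)"
    using h by (simp add: ind2)
  finally have "ennreal ((F h - F 0)\<^sup>2) \<le> ennreal h * ennreal (\<integral>s. (g s)\<^sup>2 \<partial>lborel)"
    using h by (simp add: ennreal_mult[symmetric] ennreal_leI)
  also have "ennreal (\<integral>s. (g s)\<^sup>2 \<partial>lborel) = (\<integral>\<^sup>+s. ennreal ((g s)\<^sup>2) \<partial>lborel)"
    using g2 by (simp add: nn_integral_eq_integral)
  finally show ?thesis
    by (simp only: nn_g)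
qed

lemma difference_quotients_tendsto:
  fixes f :: "real \<Rightarrow> real"
  assumes "(f has_real_derivative D) (at 0)"
  shows "(\<lambda>n. (f (1 / Suc n) - f 0) / (1 / Suc n)) \<longlonglongrightarrow> D"
proof -
  have "(\<lambda>h. (f (0 + h) - f 0) / h) \<midarrow>0\<rightarrow> D"
    using assms by (simp add: DERIV_def)
  moreover have "(\<lambda>n. 1 / real (Suc n)) \<longlonglongrightarrow> 0"
    using LIMSEQ_Suc[OF lim_1_over_n] by simp
  ultimately have "((\<lambda>h. (f (0 + h) - f 0) / h) \<circ> (\<lambda>n. 1 / real (Suc n))) \<longlonglongrightarrow> D"
    by (subst (asm) tendsto_at_iff_sequentially) auto
  then show ?thesis
    by (simp add: o_def)
qed

lemma prob_space_density:
  fixes q :: "'a \<Rightarrow> real"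
  assumes [measurable]: "q \<in> borel_measurable M" and "\<And>x. x \<in> space M \<Longrightarrow> 0 \<le> q x"
    and "integrable M q" and "(\<integral>x. q x \<partial>M) = 1"
  shows "prob_space (density M q)"
proof (rule prob_spaceI)
  have "emeasure (density M q) (space (density M q)) = (\<integral>\<^sup>+x. ennreal (q x) * indicator (space M) x \<partial>M)"
    by (simp add: emeasure_density)
  also have "\<dots> = (\<integral>\<^sup>+x. ennreal (q x) \<partial>M)"
    by (intro nn_integral_cong) simp
  also have "\<dots> = ennreal 1"
    using assms by (subst nn_integral_eq_integral) auto
  finally show "emeasure (density M q) (space (density M q)) = 1"
    by simp
qed

lemma integral_density_diff_power2_le:
  fixes p q h :: "'a \<Rightarrow> real"
  assumes [measurable]: "p \<in> borel_measurable M" "q \<in> borel_measurable M" "h \<in> borel_measurable M"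
    and p: "\<And>x. x \<in> space M \<Longrightarrow> 0 \<le> p x" and q: "\<And>x. x \<in> space M \<Longrightarrow> 0 \<le> q x"
    and int_p: "integrable M p" and int_q: "integrable M q"
    and le_p: "(\<integral>\<^sup>+x. ennreal ((h x)\<^sup>2) \<partial>density M p) \<le> ennreal A"
    and le_q: "(\<integral>\<^sup>+x. ennreal ((h x)\<^sup>2) \<partial>density M q) \<le> ennreal A"
    and A: "0 \<le> A"
  shows "integrable (density M p) h" and "integrable (density M q) h"
    and "((\<integral>x. h x \<partial>density M p) - (\<integral>x. h x \<partial>density M q))\<^sup>2
      \<le> 2 * A * (\<integral>x. \<bar>p x - q x\<bar> \<partial>M)"
proof -
  have weighted: "integrable M (\<lambda>x. r x * (h x)\<^sup>2)" "(\<integral>x. r x * (h x)\<^sup>2 \<partial>M) \<le> A"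
    "integrable M (\<lambda>x. r x * h x)" "integrable (density M r) h"
    "(\<integral>x. h x \<partial>density M r) = (\<integral>x. r x * h x \<partial>M)"
    if [measurable]: "r \<in> borel_measurable M" and r: "\<And>x. x \<in> space M \<Longrightarrow> 0 \<le> r x"
      and "integrable M r" and le: "(\<integral>\<^sup>+x. ennreal ((h x)\<^sup>2) \<partial>density M r) \<le> ennreal A"
    for r
  proof -
    have "AE x in M. 0 \<le> r x"
      using r by (rule AE_I2)
    note sq = integrable_power2_of_nn_integral_le[OF _ le A]
    show "integrable M (\<lambda>x. r x * (h x)\<^sup>2)" "(\<integral>x. r x * (h x)\<^sup>2 \<partial>M) \<le> A"
      using sq \<open>AE x in M. 0 \<le> r x\<close> by (simp_all add: integrable_density integral_density)
    have bound: "norm (r x * h x) \<le> norm ((r x + r x * (h x)\<^sup>2) / 2)" if "x \<in> space M" for x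
    proof -
      have "2 * \<bar>h x\<bar> \<le> 1 + (h x)\<^sup>2"
        using sum_squares_bound[of 1 "\<bar>h x\<bar>"] by simp
      then have "r x * (2 * \<bar>h x\<bar>) \<le> r x * (1 + (h x)\<^sup>2)"
        using r[OF that] by (rule mult_left_mono)
      then show ?thesis
        using r[OF that] by (simp add: abs_mult algebra_simps)
    qed
    show int_rh: "integrable M (\<lambda>x. r x * h x)"
    proof (rule Bochner_Integration.integrable_bound[where f="\<lambda>x. (r x + r x * (h x)\<^sup>2) / 2"])
      show "integrable M (\<lambda>x. (r x + r x * (h x)\<^sup>2) / 2)"
        using \<open>integrable M r\<close> \<open>integrable M (\<lambda>x. r x * (h x)\<^sup>2)\<close>
        by (intro integrable_divide Bochner_Integration.integrable_add)
    qed (use bound in \<open>auto intro: AE_I2\<close>)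
    then show "integrable (density M r) h" "(\<integral>x. h x \<partial>density M r) = (\<integral>x. r x * h x \<partial>M)"
      using \<open>AE x in M. 0 \<le> r x\<close> by (simp_all add: integrable_density integral_density)
  qed
  note wp = weighted[OF _ p int_p le_p] and wq = weighted[OF _ q int_q le_q]
  show "integrable (density M p) h" "integrable (density M q) h"
    using wp(4) wq(4) by simp_all
  define s where "s x = sqrt \<bar>p x - q x\<bar>" for x
  have s2: "(s x)\<^sup>2 = \<bar>p x - q x\<bar>" for x
    by (simp add: s_def)
  have sh2: "(s x * \<bar>h x\<bar>)\<^sup>2 = \<bar>p x - q x\<bar> * (h x)\<^sup>2" for x
    by (simp add: power_mult_distrib s2)
  have diff_le: "\<bar>p x - q x\<bar> * (h x)\<^sup>2 \<le> p x * (h x)\<^sup>2 + q x * (h x)\<^sup>2" if "x \<in> space M" for x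
  proof -
    have "\<bar>p x - q x\<bar> \<le> p x + q x"
      using p[OF that] q[OF that] by (simp add: abs_le_iff)
    then have "\<bar>p x - q x\<bar> * (h x)\<^sup>2 \<le> (p x + q x) * (h x)\<^sup>2"
      by (rule mult_right_mono) simp
    then show ?thesis
      by (simp add: distrib_right)
  qed
  have int_w: "integrable M (\<lambda>x. \<bar>p x - q x\<bar> * (h x)\<^sup>2)"
  proof (rule Bochner_Integration.integrable_bound[OF Bochner_Integration.integrable_add[OF wp(1) wq(1)]])
    show "AE x in M. norm (\<bar>p x - q x\<bar> * (h x)\<^sup>2) \<le> norm (p x * (h x)\<^sup>2 + q x * (h x)\<^sup>2)"
    proof (rule AE_I2)
      fix x
      assume x: "x \<in> space M"
      have "0 \<le> \<bar>p x - q x\<bar> * (h x)\<^sup>2"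
        by simp
      with diff_le[OF x] show "norm (\<bar>p x - q x\<bar> * (h x)\<^sup>2) \<le> norm (p x * (h x)\<^sup>2 + q x * (h x)\<^sup>2)"
        by simp
    qed
  qed measurable
  have "(\<integral>x. \<bar>p x - q x\<bar> * (h x)\<^sup>2 \<partial>M) \<le> (\<integral>x. p x * (h x)\<^sup>2 + q x * (h x)\<^sup>2 \<partial>M)"
    using int_w wp(1) wq(1) diff_le by (intro integral_mono_AE AE_I2) auto
  also have "\<dots> \<le> 2 * A"
    using wp(1,2) wq(1,2) by simp
  finally have le_w: "(\<integral>x. \<bar>p x - q x\<bar> * (h x)\<^sup>2 \<partial>M) \<le> 2 * A" .
  have [measurable]: "s \<in> borel_measurable M"
    unfolding s_def by measurable
  have "integrable M (\<lambda>x. (s x)\<^sup>2)" "integrable M (\<lambda>x. (s x * \<bar>h x\<bar>)\<^sup>2)"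
    unfolding s2 sh2 using int_p int_q int_w by auto
  note CS = Cauchy_Schwarz_integral[of s M "\<lambda>x. s x * \<bar>h x\<bar>", OF _ _ this]
  have CS_int: "integrable M (\<lambda>x. s x * (s x * \<bar>h x\<bar>))"
    using CS(1) by simp
  have CS_le: "(\<integral>x. s x * (s x * \<bar>h x\<bar>) \<partial>M)\<^sup>2
      \<le> (\<integral>x. \<bar>p x - q x\<bar> \<partial>M) * (\<integral>x. \<bar>p x - q x\<bar> * (h x)\<^sup>2 \<partial>M)"
    using CS(2) unfolding s2 sh2 by simp
  have abs_eq: "\<bar>(p x - q x) * h x\<bar> = s x * (s x * \<bar>h x\<bar>)" for x
    by (simp add: mult.assoc[symmetric] s2[unfolded power2_eq_square] abs_mult)
  have diff_eq: "(\<integral>x. h x \<partial>density M p) - (\<integral>x. h x \<partial>density M q) = (\<integral>x. (p x - q x) * h x \<partial>M)"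
    using wp(3,5) wq(3,5) by (simp add: left_diff_distrib)
  have "\<bar>\<integral>x. (p x - q x) * h x \<partial>M\<bar> \<le> (\<integral>x. s x * (s x * \<bar>h x\<bar>) \<partial>M)"
    unfolding abs_eq[symmetric] by (rule integral_abs_bound)
  then have "\<bar>\<integral>x. (p x - q x) * h x \<partial>M\<bar>\<^sup>2 \<le> (\<integral>x. s x * (s x * \<bar>h x\<bar>) \<partial>M)\<^sup>2"
    by (rule power_mono) simp
  also have "\<dots> \<le> (\<integral>x. \<bar>p x - q x\<bar> \<partial>M) * (\<integral>x. \<bar>p x - q x\<bar> * (h x)\<^sup>2 \<partial>M)"
    by (rule CS_le)
  also have "\<dots> \<le> (\<integral>x. \<bar>p x - q x\<bar> \<partial>M) * (2 * A)"
    by (rule mult_left_mono[OF le_w]) (simp add: integral_nonneg_AE)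
  finally show "((\<integral>x. h x \<partial>density M p) - (\<integral>x. h x \<partial>density M q))\<^sup>2
      \<le> 2 * A * (\<integral>x. \<bar>p x - q x\<bar> \<partial>M)"
    by (simp add: diff_eq mult_ac)
qed

locale L2_differentiable_integrand = finite_measure M
  for M :: "'z measure" and f :: "'z \<Rightarrow> 'p::euclidean_space \<Rightarrow> real" and g :: "'z \<Rightarrow> 'p \<Rightarrow> 'p"
    and G :: real +
  assumes measurable_f: "(\<lambda>(z, \<theta>). f z \<theta>) \<in> borel_measurable (M \<Otimes>\<^sub>M borel)"
    and measurable_g: "(\<lambda>(z, \<theta>). g z \<theta>) \<in> borel_measurable (M \<Otimes>\<^sub>M borel)"
    and has_derivative_f: "\<And>z \<theta>. z \<in> space M \<Longrightarrow> (f z has_derivative (\<lambda>h. g z \<theta> \<bullet> h)) (at \<theta>)"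
    and integrable_f: "\<And>\<theta>. integrable M (\<lambda>z. f z \<theta>)"
    and nn_integral_norm_g_le: "\<And>\<theta>. (\<integral>\<^sup>+z. ennreal ((norm (g z \<theta>))\<^sup>2) \<partial>M) \<le> ennreal G"
    and G_nonneg: "0 \<le> G"
begin

lemma measurable_f_comp[measurable]:
  assumes "a \<in> measurable N M" and "b \<in> borel_measurable N"
  shows "(\<lambda>x. f (a x) (b x)) \<in> borel_measurable N"
  using measurable_compose[OF measurable_Pair[OF assms] measurable_f] by simp

lemma measurable_g_comp[measurable]:
  assumes "a \<in> measurable N M" and "b \<in> borel_measurable N"
  shows "(\<lambda>x. g (a x) (b x)) \<in> borel_measurable N"
  using measurable_compose[OF measurable_Pair[OF assms] measurable_g] by simp

lemma nn_integral_inner_g_le: "(\<integral>\<^sup>+z. ennreal ((g z \<theta> \<bullet> u)\<^sup>2) \<partial>M) \<le> ennreal (G * (norm u)\<^sup>2)"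
  using nn_integral_norm_g_le G_nonneg by (rule nn_integral_inner_power2_le[rotated]) measurable

text \<open>By Tonelli, the squared difference quotient is dominated by the average over the segment
  \<open>[\<theta>, \<theta> + h u]\<close> of the squared directional derivatives, each of mean at most \<open>G \<parallel>u\<parallel>\<^sup>2\<close>.\<close>

lemma nn_integral_difference_quotient_le:
  assumes h: "0 < h"
  shows "(\<integral>\<^sup>+z. ennreal (((f z (\<theta> + h *\<^sub>R u) - f z \<theta>) / h)\<^sup>2) \<partial>M) \<le> ennreal (G * (norm u)\<^sup>2)"
proof -
  define F' where "F' z s = g z (\<theta> + s *\<^sub>R u) \<bullet> u" for z s
  define I where "I z = (\<integral>\<^sup>+s. indicator {0..h} s * ennreal ((F' z s)\<^sup>2) \<partial>lborel)" for z
  have F'_measurable: "(\<lambda>(z, s). indicator {0..h} s * ennreal ((F' z s)\<^sup>2)) \<in> borel_measurable (M \<Otimes>\<^sub>M lborel)"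
    unfolding F'_def by measurable
  have "ennreal (((f z (\<theta> + h *\<^sub>R u) - f z \<theta>) / h)\<^sup>2) \<le> ennreal (1 / h) * I z"
    if z: "z \<in> space M" for z
  proof -
    have "((\<lambda>s. f z (\<theta> + s *\<^sub>R u)) has_real_derivative F' z s) (at s)" for s
      unfolding F'_def by (rule has_real_derivative_along_line) (rule has_derivative_f[OF z])
    moreover have "F' z \<in> borel_measurable borel"
      using z unfolding F'_def by measurable
    ultimately have "ennreal ((f z (\<theta> + h *\<^sub>R u) - f z (\<theta> + 0 *\<^sub>R u))\<^sup>2) \<le> ennreal h * I z"
      unfolding I_def by (rule power2_increment_le_nn_integral_deriv[OF h])
    then have "ennreal (1 / h) * ennreal (1 / h) * ennreal ((f z (\<theta> + h *\<^sub>R u) - f z \<theta>)\<^sup>2)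
        \<le> ennreal (1 / h) * (ennreal (1 / h) * ennreal h) * I z"
      by (simp add: mult.assoc mult_left_mono)
    moreover have "ennreal (1 / h) * ennreal h = 1"
      using h by (simp add: ennreal_mult[symmetric])
    ultimately show ?thesis
      using h by (simp add: ennreal_mult[symmetric] power_divide power2_eq_square)
  qed
  then have "(\<integral>\<^sup>+z. ennreal (((f z (\<theta> + h *\<^sub>R u) - f z \<theta>) / h)\<^sup>2) \<partial>M)
      \<le> (\<integral>\<^sup>+z. ennreal (1 / h) * I z \<partial>M)"
    by (intro nn_integral_mono)
  also have "\<dots> = ennreal (1 / h) * (\<integral>\<^sup>+z. I z \<partial>M)"
    unfolding I_def
    by (rule nn_integral_cmult) (use lborel.borel_measurable_nn_integral_fst[OF F'_measurable] in simp)
  also have "(\<integral>\<^sup>+z. I z \<partial>M) = (\<integral>\<^sup>+s. (\<integral>\<^sup>+z. indicator {0..h} s * ennreal ((F' z s)\<^sup>2) \<partial>M) \<partial>lborel)"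
  proof -
    have "pair_sigma_finite M lborel"
      unfolding pair_sigma_finite_def
      using sigma_finite_measure_axioms lborel.sigma_finite_measure_axioms by blast
    from pair_sigma_finite.Fubini'[OF this, of "\<lambda>z s. indicator {0..h} s * ennreal ((F' z s)\<^sup>2)"]
    show ?thesis
      unfolding I_def using F'_measurable by simp
  qed
  also have "\<dots> \<le> (\<integral>\<^sup>+s. ennreal (G * (norm u)\<^sup>2) * indicator {0..h} s \<partial>lborel)"
  proof (intro nn_integral_mono)
    fix s
    have "(\<integral>\<^sup>+z. indicator {0..h} s * ennreal ((F' z s)\<^sup>2) \<partial>M)
        = indicator {0..h} s * (\<integral>\<^sup>+z. ennreal ((F' z s)\<^sup>2) \<partial>M)"
      by (rule nn_integral_cmult) (simp add: F'_def)
    also have "\<dots> \<le> indicator {0..h} s * ennreal (G * (norm u)\<^sup>2)"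
      unfolding F'_def by (intro mult_left_mono nn_integral_inner_g_le) simp
    finally show "(\<integral>\<^sup>+z. indicator {0..h} s * ennreal ((F' z s)\<^sup>2) \<partial>M)
        \<le> ennreal (G * (norm u)\<^sup>2) * indicator {0..h} s"
      by (simp add: mult.commute)
  qed
  also have "\<dots> = ennreal (G * (norm u)\<^sup>2) * ennreal h"
    using h by (simp add: nn_integral_cmult_indicator)
  finally show ?thesis
    using h G_nonneg by (simp add: ennreal_mult[symmetric] mult_left_mono)
qed

lemma inner_gradient_integral_eq:
  assumes diff: "((\<lambda>\<theta>. \<integral>z. f z \<theta> \<partial>M) has_derivative (\<lambda>h. D \<bullet> h)) (at \<theta>)"
  shows "D \<bullet> u = (\<integral>z. g z \<theta> \<bullet> u \<partial>M)"
proof -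
  define DQ where "DQ n z = (f z (\<theta> + (1 / Suc n) *\<^sub>R u) - f z \<theta>) / (1 / Suc n)" for n z
  define d where "d n z = DQ n z - g z \<theta> \<bullet> u" for n z
  have DQ_measurable[measurable]: "DQ n \<in> borel_measurable M"
    and d_measurable[measurable]: "d n \<in> borel_measurable M" for n
    unfolding DQ_def d_def by measurable
  have B: "0 \<le> G * (norm u)\<^sup>2"
    using G_nonneg by simp
  have gu_measurable: "(\<lambda>z. g z \<theta> \<bullet> u) \<in> borel_measurable M"
    by measurable
  have DQ2: "integrable M (\<lambda>z. (DQ n z)\<^sup>2)" "(\<integral>z. (DQ n z)\<^sup>2 \<partial>M) \<le> G * (norm u)\<^sup>2" for n
  proof -
    have "(\<integral>\<^sup>+z. ennreal ((DQ n z)\<^sup>2) \<partial>M) \<le> ennreal (G * (norm u)\<^sup>2)"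
      unfolding DQ_def by (rule nn_integral_difference_quotient_le) simp
    from integrable_power2_of_nn_integral_le[OF _ this B]
    show "integrable M (\<lambda>z. (DQ n z)\<^sup>2)" "(\<integral>z. (DQ n z)\<^sup>2 \<partial>M) \<le> G * (norm u)\<^sup>2"
      by simp_all
  qed
  note g2 = integrable_power2_of_nn_integral_le[OF gu_measurable nn_integral_inner_g_le B]
  have d_le: "(d n z)\<^sup>2 \<le> 2 * (DQ n z)\<^sup>2 + 2 * (g z \<theta> \<bullet> u)\<^sup>2" for n z
    unfolding d_def using sum_squares_bound[of "DQ n z" "- (g z \<theta> \<bullet> u)"]
    by (simp add: power2_diff)
  have int_bound: "integrable M (\<lambda>z. 2 * (DQ n z)\<^sup>2 + 2 * (g z \<theta> \<bullet> u)\<^sup>2)" for n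
    using DQ2(1)[of n] g2(1) by (intro Bochner_Integration.integrable_add integrable_mult_right)
  have int_d2: "integrable M (\<lambda>z. (d n z)\<^sup>2)" for n
    by (rule Bochner_Integration.integrable_bound[OF int_bound]) (use d_le in \<open>auto intro: AE_I2\<close>)
  have "(\<integral>z. (d n z)\<^sup>2 \<partial>M) \<le> (\<integral>z. 2 * (DQ n z)\<^sup>2 + 2 * (g z \<theta> \<bullet> u)\<^sup>2 \<partial>M)" for n
    using int_d2 int_bound d_le by (rule integral_mono)
  also have "\<dots> n \<le> 4 * (G * (norm u)\<^sup>2)" for n
    using DQ2[of n] g2 by simp
  finally have d_L1: "(\<lambda>n. \<integral>z. \<bar>d n z\<bar> \<partial>M) \<longlonglongrightarrow> 0"
  proof (intro integral_abs_tendsto_zero_of_L2_bounded[OF finite_measure_axioms] int_d2)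
    fix z
    assume "z \<in> space M"
    have "((\<lambda>s. f z (\<theta> + s *\<^sub>R u)) has_real_derivative g z \<theta> \<bullet> u) (at 0)"
      using has_real_derivative_along_line[of "f z" "g z \<theta>" \<theta> 0 u] has_derivative_f[OF \<open>z \<in> space M\<close>]
      by simp
    from difference_quotients_tendsto[OF this]
    show "(\<lambda>n. d n z) \<longlonglongrightarrow> 0"
      unfolding d_def DQ_def by (simp add: LIM_zero_iff)
  qed simp_all
  have abs_le: "\<bar>(\<integral>z. DQ n z \<partial>M) - (\<integral>z. g z \<theta> \<bullet> u \<partial>M)\<bar> \<le> (\<integral>z. \<bar>d n z\<bar> \<partial>M)" for n
  proof -
    have "integrable M (DQ n)" "integrable M (\<lambda>z. g z \<theta> \<bullet> u)"
      using square_integrable_imp_integrable[OF DQ_measurable DQ2(1)]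
        square_integrable_imp_integrable[OF gu_measurable g2(1)] .
    then have "(\<integral>z. DQ n z \<partial>M) - (\<integral>z. g z \<theta> \<bullet> u \<partial>M) = (\<integral>z. d n z \<partial>M)"
      unfolding d_def by (rule Bochner_Integration.integral_diff[symmetric])
    then show ?thesis
      using integral_abs_bound[of M "d n"] by simp
  qed
  have "(\<lambda>n. (\<integral>z. DQ n z \<partial>M) - (\<integral>z. g z \<theta> \<bullet> u \<partial>M)) \<longlonglongrightarrow> 0"
    by (rule Lim_null_comparison[OF always_eventually d_L1]) (simp add: abs_le)
  then have "(\<lambda>n. \<integral>z. DQ n z \<partial>M) \<longlonglongrightarrow> (\<integral>z. g z \<theta> \<bullet> u \<partial>M)"
    by (rule LIM_zero_cancel)
  moreover have "(\<lambda>n. \<integral>z. DQ n z \<partial>M) \<longlonglongrightarrow> D \<bullet> u"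
  proof -
    have "((\<lambda>s. \<integral>z. f z (\<theta> + s *\<^sub>R u) \<partial>M) has_real_derivative D \<bullet> u) (at 0)"
      using has_real_derivative_along_line[of "\<lambda>\<theta>. \<integral>z. f z \<theta> \<partial>M" D \<theta> 0 u] diff by simp
    from difference_quotients_tendsto[OF this]
    show ?thesis
      unfolding DQ_def
      by (simp only: integral_divide_zero Bochner_Integration.integral_diff[OF integrable_f integrable_f]
          scaleR_zero_left add_0_right)
  qed
  ultimately show ?thesis
    by (rule LIMSEQ_unique[symmetric])
qed

lemma norm_gradient_integral_le:
  assumes "prob_space M"
    and diff: "((\<lambda>\<theta>. \<integral>z. f z \<theta> \<partial>M) has_derivative (\<lambda>h. D \<bullet> h)) (at \<theta>)"
  shows "(norm D)\<^sup>2 \<le> G"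
proof -
  have B: "0 \<le> G * (norm D)\<^sup>2"
    using G_nonneg by simp
  note g2 = integrable_power2_of_nn_integral_le[OF _ nn_integral_inner_g_le[of \<theta> D] B]
  have "((norm D)\<^sup>2)\<^sup>2 = (\<integral>z. 1 * (g z \<theta> \<bullet> D) \<partial>M)\<^sup>2"
    using inner_gradient_integral_eq[OF diff, of D] by (simp add: power2_norm_eq_inner)
  also have "\<dots> \<le> (\<integral>z. 1\<^sup>2 \<partial>M) * (\<integral>z. (g z \<theta> \<bullet> D)\<^sup>2 \<partial>M)"
    using g2(1) by (intro Cauchy_Schwarz_integral(2)) auto
  also have "\<dots> \<le> G * (norm D)\<^sup>2"
    using g2(2) \<open>prob_space M\<close> by (simp add: prob_space.prob_space)
  finally have le: "(norm D)\<^sup>2 * (norm D)\<^sup>2 \<le> G * (norm D)\<^sup>2"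
    by (simp add: power2_eq_square)
  show ?thesis
  proof (cases "D = 0")
    case False
    then have "0 < (norm D)\<^sup>2"
      by simp
    with le show ?thesis
      by (rule mult_right_le_imp_le)
  qed (simp add: G_nonneg)
qed

end

text \<open>\<open>sgd_iterate gl \<eta> t\<close> computes \<open>\<Theta> t\<close> from the history \<open>(\<Theta> 0, Z 0, \<dots>, Z (t - 1))\<close>, the only
  information the sampling hypothesis \<open>Z_cond\<close> conditions on.\<close>

primrec sgd_iterate :: "('z \<Rightarrow> 'p \<Rightarrow> 'p) \<Rightarrow> (nat \<Rightarrow> real) \<Rightarrow> nat \<Rightarrow> 'p \<times> (nat \<Rightarrow> 'z) \<Rightarrow> 'p::real_vector"
  where
    "sgd_iterate g \<eta> 0 x = fst x"
  | "sgd_iterate g \<eta> (Suc t) x = sgd_iterate g \<eta> t x - \<eta> t *\<^sub>R g (snd x t) (sgd_iterate g \<eta> t x)"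

text \<open>The hypotheses of \<open>proposition1\<close>, except the divergence of \<open>\<Sum> \<eta> t\<close>, which the bound
  does not need.\<close>

locale sgd =
  fixes Mz :: "'z measure" and P :: "'w measure"
    and loss :: "'z \<Rightarrow> 'p::euclidean_space \<Rightarrow> real" and gl :: "'z \<Rightarrow> 'p \<Rightarrow> 'p"
    and p :: "nat \<Rightarrow> 'z \<Rightarrow> real" and pstar :: "'z \<Rightarrow> real" and c :: "nat \<Rightarrow> real"
    and L :: "'p \<Rightarrow> real" and gradL :: "'p \<Rightarrow> 'p" and Lc :: real
    and \<eta> :: "nat \<Rightarrow> real" and G :: real
    and Z :: "nat \<Rightarrow> 'w \<Rightarrow> 'z" and \<Theta> :: "nat \<Rightarrow> 'w \<Rightarrow> 'p"
  assumes prob: "prob_space P"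
    and loss_nonneg: "\<And>z \<theta>. z \<in> space Mz \<Longrightarrow> loss z \<theta> \<ge> 0"
    and loss_meas: "(\<lambda>(z, \<theta>). loss z \<theta>) \<in> borel_measurable (Mz \<Otimes>\<^sub>M borel)"
    and gl_meas: "(\<lambda>(z, \<theta>). gl z \<theta>) \<in> borel_measurable (Mz \<Otimes>\<^sub>M borel)"
    and loss_diff: "\<And>z \<theta>. z \<in> space Mz \<Longrightarrow> (loss z has_derivative (\<lambda>h. gl z \<theta> \<bullet> h)) (at \<theta>)"
    and p_meas: "\<And>t. p t \<in> borel_measurable Mz"
    and p_nonneg: "\<And>t z. z \<in> space Mz \<Longrightarrow> p t z \<ge> 0"
    and p_int: "\<And>t. integrable Mz (p t)"
    and p_one: "\<And>t. (\<integral>z. p t z \<partial>Mz) = 1"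
    and pstar_meas: "pstar \<in> borel_measurable Mz"
    and pstar_nonneg: "\<And>z. z \<in> space Mz \<Longrightarrow> pstar z \<ge> 0"
    and pstar_int: "integrable Mz pstar"
    and pstar_one: "(\<integral>z. pstar z \<partial>Mz) = 1"
    and c_def: "\<And>t. c t = (\<integral>z. \<bar>p t z - pstar z\<bar> \<partial>Mz)"
    and L_integrable: "\<And>\<theta>. integrable Mz (\<lambda>z. pstar z * loss z \<theta>)"
    and L_def: "\<And>\<theta>. L \<theta> = (\<integral>z. pstar z * loss z \<theta> \<partial>Mz)"
    and Z_meas: "\<And>t. Z t \<in> measurable P Mz"
    and Theta0_meas: "\<Theta> 0 \<in> borel_measurable P"
    and Z_cond: "\<And>t C A. C \<in> sets (borel \<Otimes>\<^sub>M (\<Pi>\<^sub>M i\<in>{..<t}. Mz)) \<Longrightarrow> A \<in> sets Mz \<Longrightarrow>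
                   measure P {\<omega> \<in> space P. (\<Theta> 0 \<omega>, \<lambda>i\<in>{..<t}. Z i \<omega>) \<in> C \<and> Z t \<omega> \<in> A}
                 = measure P {\<omega> \<in> space P. (\<Theta> 0 \<omega>, \<lambda>i\<in>{..<t}. Z i \<omega>) \<in> C}
                   * measure (density Mz (p t)) A"
    and Theta_step: "\<And>t \<omega>. \<omega> \<in> space P \<Longrightarrow>
                      \<Theta> (Suc t) \<omega> = \<Theta> t \<omega> - \<eta> t *\<^sub>R gl (Z t \<omega>) (\<Theta> t \<omega>)"
    and eta_pos: "\<And>t. \<eta> t > 0"
    and A1_diff: "\<And>\<theta>. (L has_derivative (\<lambda>h. gradL \<theta> \<bullet> h)) (at \<theta>)"
    and A1_lip: "Lc-lipschitz_on UNIV gradL"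
    and A2_sq: "summable (\<lambda>t. (\<eta> t)\<^sup>2)"
    and A3_pos: "G > 0"
    and A3: "\<And>t \<theta>. (\<integral>\<^sup>+ z. ennreal (p t z * (norm (gl z \<theta>))\<^sup>2) \<partial>Mz) \<le> ennreal G"
    and A4: "summable c"
    and init_int: "integrable P (\<lambda>\<omega>. L (\<Theta> 0 \<omega>))"
begin

abbreviation \<mu> :: "nat \<Rightarrow> 'z measure"
  where "\<mu> t \<equiv> density Mz (p t)"

abbreviation \<mu>_star :: "'z measure"
  where "\<mu>_star \<equiv> density Mz pstar"

declare p_meas[measurable] pstar_meas[measurable] Z_meas[measurable] Theta0_meas[measurable]

lemma measurable_gl_comp[measurable]:
  assumes "a \<in> measurable N Mz" and "b \<in> borel_measurable N"
  shows "(\<lambda>x. gl (a x) (b x)) \<in> borel_measurable N"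
  using measurable_compose[OF measurable_Pair[OF assms] gl_meas] by simp

lemma measurable_loss_comp[measurable]:
  assumes "a \<in> measurable N Mz" and "b \<in> borel_measurable N"
  shows "(\<lambda>x. loss (a x) (b x)) \<in> borel_measurable N"
  using measurable_compose[OF measurable_Pair[OF assms] loss_meas] by simp

lemma prob_space_\<mu>: "prob_space (\<mu> t)"
  using p_nonneg p_int p_one by (intro prob_space_density) auto

lemma prob_space_\<mu>_star: "prob_space \<mu>_star"
  using pstar_nonneg pstar_int pstar_one by (intro prob_space_density) auto

lemma G_nonneg: "0 \<le> G"
  using A3_pos by simp

lemma c_nonneg: "0 \<le> c t"
  by (simp add: c_def)

lemma nn_integral_norm_gl_le: "(\<integral>\<^sup>+z. ennreal ((norm (gl z \<theta>))\<^sup>2) \<partial>\<mu> t) \<le> ennreal G"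
proof -
  have "(\<integral>\<^sup>+z. ennreal ((norm (gl z \<theta>))\<^sup>2) \<partial>\<mu> t) = (\<integral>\<^sup>+z. ennreal (p t z * (norm (gl z \<theta>))\<^sup>2) \<partial>Mz)"
    by (simp add: nn_integral_density ennreal_mult'')
  then show ?thesis
    using A3 by simp
qed

lemma nn_integral_norm_gl_star_le: "(\<integral>\<^sup>+z. ennreal ((norm (gl z \<theta>))\<^sup>2) \<partial>\<mu>_star) \<le> ennreal G"
proof (rule nn_integral_density_le_of_L1_tendsto)
  show "(\<lambda>t. \<integral>z. \<bar>p t z - pstar z\<bar> \<partial>Mz) \<longlonglongrightarrow> 0"
  proof -
    have "(\<lambda>t. \<integral>z. \<bar>p t z - pstar z\<bar> \<partial>Mz) = c"
      by (rule ext) (rule c_def[symmetric])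
    with summable_LIMSEQ_zero[OF A4] show ?thesis
      by simp
  qed
  show "integrable Mz (\<lambda>z. p t z - pstar z)" for t
    using p_int pstar_int by simp
qed (use nn_integral_norm_gl_le in \<open>simp_all\<close>)

lemma L_eq_integral: "L = (\<lambda>\<theta>. \<integral>z. loss z \<theta> \<partial>\<mu>_star)"
proof
  fix \<theta>
  show "L \<theta> = (\<integral>z. loss z \<theta> \<partial>\<mu>_star)"
    using pstar_nonneg by (simp add: L_def integral_density AE_I2)
qed

sublocale star: L2_differentiable_integrand \<mu>_star loss gl G
proof (intro L2_differentiable_integrand.intro L2_differentiable_integrand_axioms.intro)
  show "finite_measure \<mu>_star"
    using prob_space_\<mu>_star unfolding prob_space_def by blast
  have "sets (\<mu>_star \<Otimes>\<^sub>M borel) = sets (Mz \<Otimes>\<^sub>M borel)"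
    by (rule sets_pair_measure_cong) simp_all
  then show "(\<lambda>(z, \<theta>). loss z \<theta>) \<in> borel_measurable (\<mu>_star \<Otimes>\<^sub>M borel)"
    and "(\<lambda>(z, \<theta>). gl z \<theta>) \<in> borel_measurable (\<mu>_star \<Otimes>\<^sub>M borel)"
    using loss_meas gl_meas by (simp_all cong: measurable_cong_sets)
  show "(loss z has_derivative (\<lambda>h. gl z \<theta> \<bullet> h)) (at \<theta>)" if "z \<in> space \<mu>_star" for z \<theta>
    using that loss_diff by simp
  show "integrable \<mu>_star (\<lambda>z. loss z \<theta>)" for \<theta>
    using L_integrable[of \<theta>] pstar_nonneg by (subst integrable_density) (auto intro: AE_I2)
qed (fact nn_integral_norm_gl_star_le G_nonneg)+

lemma inner_gradL_eq: "gradL \<theta> \<bullet> u = (\<integral>z. gl z \<theta> \<bullet> u \<partial>\<mu>_star)"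
  using A1_diff[of \<theta>] unfolding L_eq_integral by (rule star.inner_gradient_integral_eq)

lemma norm_gradL_le: "(norm (gradL \<theta>))\<^sup>2 \<le> G"
  using prob_space_\<mu>_star A1_diff[of \<theta>] unfolding L_eq_integral by (rule star.norm_gradient_integral_le)

lemma integral_inner_gradL_gl_ge:
  "(norm (gradL \<theta>))\<^sup>2 - G * sqrt (2 * c t) \<le> (\<integral>z. gradL \<theta> \<bullet> gl z \<theta> \<partial>\<mu> t)"
proof -
  define v where "v = gradL \<theta>"
  define h where "h z = gl z \<theta> \<bullet> v" for z
  have [measurable]: "h \<in> borel_measurable Mz"
    unfolding h_def by measurable
  have B: "0 \<le> G * (norm v)\<^sup>2"
    using G_nonneg by simp
  have "(\<integral>\<^sup>+z. ennreal ((h z)\<^sup>2) \<partial>\<mu> t) \<le> ennreal (G * (norm v)\<^sup>2)"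
    unfolding h_def using nn_integral_norm_gl_le G_nonneg by (rule nn_integral_inner_power2_le[rotated]) simp
  moreover have "(\<integral>\<^sup>+z. ennreal ((h z)\<^sup>2) \<partial>\<mu>_star) \<le> ennreal (G * (norm v)\<^sup>2)"
    unfolding h_def using nn_integral_norm_gl_star_le G_nonneg by (rule nn_integral_inner_power2_le[rotated]) simp
  ultimately have "((\<integral>z. h z \<partial>\<mu> t) - (\<integral>z. h z \<partial>\<mu>_star))\<^sup>2 \<le> 2 * (G * (norm v)\<^sup>2) * c t"
    using integral_density_diff_power2_le(3)[of "p t" Mz pstar h, OF _ _ _ p_nonneg pstar_nonneg p_int pstar_int _ _ B]
    by (simp add: c_def)
  also have "\<dots> \<le> 2 * (G * G) * c t"
    using norm_gradL_le[of \<theta>] G_nonneg c_nonneg[of t] unfolding v_def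
    by (intro mult_right_mono mult_left_mono) auto
  also have "\<dots> = (G * sqrt (2 * c t))\<^sup>2"
    using c_nonneg[of t] by (simp add: power_mult_distrib power2_eq_square)
  finally have sq: "((\<integral>z. h z \<partial>\<mu> t) - (\<integral>z. h z \<partial>\<mu>_star))\<^sup>2 \<le> (G * sqrt (2 * c t))\<^sup>2" .
  have "\<bar>(\<integral>z. h z \<partial>\<mu> t) - (\<integral>z. h z \<partial>\<mu>_star)\<bar> \<le> G * sqrt (2 * c t)"
    by (rule power2_le_imp_le) (use sq G_nonneg c_nonneg[of t] in simp_all)
  moreover have "(\<integral>z. h z \<partial>\<mu>_star) = (norm v)\<^sup>2"
    unfolding h_def v_def inner_gradL_eq[symmetric] by (simp add: power2_norm_eq_inner)
  ultimately show ?thesis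
    unfolding h_def v_def by (simp add: inner_commute)
qed


abbreviation history_space :: "nat \<Rightarrow> ('p \<times> (nat \<Rightarrow> 'z)) measure"
  where "history_space t \<equiv> borel \<Otimes>\<^sub>M (\<Pi>\<^sub>M i\<in>{..<t}. Mz)"

abbreviation history :: "nat \<Rightarrow> 'w \<Rightarrow> 'p \<times> (nat \<Rightarrow> 'z)"
  where "history t \<omega> \<equiv> (\<Theta> 0 \<omega>, \<lambda>i\<in>{..<t}. Z i \<omega>)"

lemma measurable_history[measurable]: "history t \<in> measurable P (history_space t)"
  by measurable

lemma measurable_sgd_iterate: "t \<le> n \<Longrightarrow> sgd_iterate gl \<eta> t \<in> borel_measurable (history_space n)"
proof (induction t)
  case (Suc t)
  then have [measurable]: "sgd_iterate gl \<eta> t \<in> borel_measurable (history_space n)"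
    by simp
  have "(\<lambda>f. f t) \<in> measurable (\<Pi>\<^sub>M i\<in>{..<n}. Mz) Mz"
    using Suc.prems measurable_component_singleton[of t "{..<n}" "\<lambda>_. Mz"] by simp
  then have [measurable]: "(\<lambda>x. snd x t) \<in> measurable (history_space n) Mz"
    using measurable_comp[OF measurable_snd] by (simp add: o_def)
  show ?case
    by simp measurable
next
  case 0
  have "sgd_iterate gl \<eta> 0 = fst"
    by (rule ext) simp
  then show ?case
    by simp
qed

lemma sgd_iterate_history: "\<omega> \<in> space P \<Longrightarrow> t \<le> n \<Longrightarrow> sgd_iterate gl \<eta> t (history n \<omega>) = \<Theta> t \<omega>"
  by (induction t) (simp_all add: Theta_step)

lemma measurable_Theta[measurable]: "\<Theta> t \<in> borel_measurable P"
proof -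
  have "(\<lambda>\<omega>. sgd_iterate gl \<eta> t (history t \<omega>)) \<in> borel_measurable P"
    using measurable_compose[OF measurable_history measurable_sgd_iterate[of t t]] by simp
  then show ?thesis
    by (rule measurable_cong[THEN iffD1, rotated]) (simp add: sgd_iterate_history)
qed

lemma measurable_gradL[measurable]: "gradL \<in> borel_measurable borel"
  using A1_lip by (intro borel_measurable_continuous_onI lipschitz_on_continuous_on)

lemma measurable_L[measurable]: "L \<in> borel_measurable borel"
proof (rule borel_measurable_continuous_onI)
  show "continuous_on UNIV L"
    using A1_diff has_derivative_continuous by (simp add: continuous_on_eq_continuous_within) blast
qed

lemma distr_Theta_Z: "distr P (borel \<Otimes>\<^sub>M Mz) (\<lambda>\<omega>. (\<Theta> t \<omega>, Z t \<omega>)) = distr P borel (\<Theta> t) \<Otimes>\<^sub>M \<mu> t"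
proof (rule pair_measure_eqI[symmetric])
  interpret P: prob_space P
    by (rule prob)
  interpret \<mu>: prob_space "\<mu> t"
    by (rule prob_space_\<mu>)
  interpret law: prob_space "distr P borel (\<Theta> t)"
    by (rule P.prob_space_distr) simp
  show "sigma_finite_measure (distr P borel (\<Theta> t))" "sigma_finite_measure (\<mu> t)"
    by unfold_locales
  show "sets (distr P borel (\<Theta> t) \<Otimes>\<^sub>M \<mu> t) = sets (distr P (borel \<Otimes>\<^sub>M Mz) (\<lambda>\<omega>. (\<Theta> t \<omega>, Z t \<omega>)))"
    by (simp only: sets_distr, rule sets_pair_measure_cong) simp_all
  fix A B
  assume "A \<in> sets (distr P borel (\<Theta> t))" and "B \<in> sets (\<mu> t)"
  then have A: "A \<in> sets borel" and B: "B \<in> sets Mz"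
    by simp_all
  define C where "C = sgd_iterate gl \<eta> t -` A \<inter> space (history_space t)"
  have C: "C \<in> sets (history_space t)"
    unfolding C_def by (rule measurable_sets[OF measurable_sgd_iterate A]) simp
  have history_C: "history t \<omega> \<in> C \<longleftrightarrow> \<Theta> t \<omega> \<in> A" if "\<omega> \<in> space P" for \<omega>
    using that measurable_space[OF measurable_history that] by (simp add: C_def sgd_iterate_history)
  have "(\<lambda>\<omega>. (\<Theta> t \<omega>, Z t \<omega>)) -` (A \<times> B) \<inter> space P = {\<omega> \<in> space P. history t \<omega> \<in> C \<and> Z t \<omega> \<in> B}"
    using history_C by auto
  then have "emeasure (distr P (borel \<Otimes>\<^sub>M Mz) (\<lambda>\<omega>. (\<Theta> t \<omega>, Z t \<omega>))) (A \<times> B)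
      = measure P {\<omega> \<in> space P. history t \<omega> \<in> C} * measure (\<mu> t) B"
    using A B Z_cond[OF C B] by (simp add: emeasure_distr P.emeasure_eq_measure)
  also have "{\<omega> \<in> space P. history t \<omega> \<in> C} = \<Theta> t -` A \<inter> space P"
    using history_C by auto
  finally show "emeasure (distr P borel (\<Theta> t)) A * emeasure (\<mu> t) B
      = emeasure (distr P (borel \<Otimes>\<^sub>M Mz) (\<lambda>\<omega>. (\<Theta> t \<omega>, Z t \<omega>))) (A \<times> B)"
    using A by (simp add: emeasure_distr P.emeasure_eq_measure \<mu>.emeasure_eq_measure ennreal_mult)
qed

lemma pair_sigma_finite_law: "pair_sigma_finite (distr P borel (\<Theta> t)) (\<mu> t)"
proof -
  interpret P: prob_space P
    by (rule prob)
  interpret \<mu>: prob_space "\<mu> t"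
    by (rule prob_space_\<mu>)
  interpret law: prob_space "distr P borel (\<Theta> t)"
    by (rule P.prob_space_distr) simp
  show ?thesis
    by unfold_locales
qed

lemma sets_law: "sets (distr P borel (\<Theta> t) \<Otimes>\<^sub>M \<mu> t) = sets (borel \<Otimes>\<^sub>M Mz)"
  by (rule sets_pair_measure_cong) simp_all

lemma nn_integral_Theta_Z:
  assumes f: "f \<in> borel_measurable (borel \<Otimes>\<^sub>M Mz)"
  shows "(\<integral>\<^sup>+\<omega>. f (\<Theta> t \<omega>, Z t \<omega>) \<partial>P) = (\<integral>\<^sup>+\<omega>. (\<integral>\<^sup>+z. f (\<Theta> t \<omega>, z) \<partial>\<mu> t) \<partial>P)"
proof -
  interpret law: pair_sigma_finite "distr P borel (\<Theta> t)" "\<mu> t"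
    by (rule pair_sigma_finite_law)
  have f': "f \<in> borel_measurable (distr P borel (\<Theta> t) \<Otimes>\<^sub>M \<mu> t)"
    using f sets_law by (simp cong: measurable_cong_sets)
  have "(\<integral>\<^sup>+\<omega>. f (\<Theta> t \<omega>, Z t \<omega>) \<partial>P) = (\<integral>\<^sup>+y. f y \<partial>distr P (borel \<Otimes>\<^sub>M Mz) (\<lambda>\<omega>. (\<Theta> t \<omega>, Z t \<omega>)))"
    using f by (simp add: nn_integral_distr)
  also have "\<dots> = (\<integral>\<^sup>+\<theta>. (\<integral>\<^sup>+z. f (\<theta>, z) \<partial>\<mu> t) \<partial>distr P borel (\<Theta> t))"
    unfolding distr_Theta_Z by (rule law.M2.nn_integral_fst[OF f', symmetric])
  also have "\<dots> = (\<integral>\<^sup>+\<omega>. (\<integral>\<^sup>+z. f (\<Theta> t \<omega>, z) \<partial>\<mu> t) \<partial>P)"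
    using law.M2.borel_measurable_nn_integral_fst[OF f'] by (simp add: nn_integral_distr)
  finally show ?thesis .
qed

lemma integral_Theta_Z:
  fixes f :: "'p \<times> 'z \<Rightarrow> real"
  assumes f: "f \<in> borel_measurable (borel \<Otimes>\<^sub>M Mz)" and int: "integrable P (\<lambda>\<omega>. f (\<Theta> t \<omega>, Z t \<omega>))"
  shows "integrable P (\<lambda>\<omega>. \<integral>z. f (\<Theta> t \<omega>, z) \<partial>\<mu> t)"
    and "(\<integral>\<omega>. f (\<Theta> t \<omega>, Z t \<omega>) \<partial>P) = (\<integral>\<omega>. (\<integral>z. f (\<Theta> t \<omega>, z) \<partial>\<mu> t) \<partial>P)"
proof -
  interpret law: pair_sigma_finite "distr P borel (\<Theta> t)" "\<mu> t"
    by (rule pair_sigma_finite_law)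
  have f': "f \<in> borel_measurable (distr P borel (\<Theta> t) \<Otimes>\<^sub>M \<mu> t)"
    using f sets_law by (simp cong: measurable_cong_sets)
  have int_law: "integrable (distr P borel (\<Theta> t) \<Otimes>\<^sub>M \<mu> t) f"
    using int f unfolding distr_Theta_Z[symmetric] by (simp add: integrable_distr_eq)
  have inner_measurable: "(\<lambda>\<theta>. \<integral>z. f (\<theta>, z) \<partial>\<mu> t) \<in> borel_measurable borel"
    using law.M2.borel_measurable_lebesgue_integral[of "\<lambda>\<theta> z. f (\<theta>, z)"] f' by simp
  show "integrable P (\<lambda>\<omega>. \<integral>z. f (\<Theta> t \<omega>, z) \<partial>\<mu> t)"
    using law.integrable_fst'[OF int_law] inner_measurable by (simp add: integrable_distr_eq)
  have "(\<integral>\<omega>. f (\<Theta> t \<omega>, Z t \<omega>) \<partial>P) = (\<integral>y. f y \<partial>distr P (borel \<Otimes>\<^sub>M Mz) (\<lambda>\<omega>. (\<Theta> t \<omega>, Z t \<omega>)))"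
    using f by (simp add: integral_distr)
  also have "\<dots> = (\<integral>\<theta>. (\<integral>z. f (\<theta>, z) \<partial>\<mu> t) \<partial>distr P borel (\<Theta> t))"
    unfolding distr_Theta_Z by (rule law.integral_fst'[OF int_law, symmetric])
  also have "\<dots> = (\<integral>\<omega>. (\<integral>z. f (\<Theta> t \<omega>, z) \<partial>\<mu> t) \<partial>P)"
    using inner_measurable by (simp add: integral_distr)
  finally show "(\<integral>\<omega>. f (\<Theta> t \<omega>, Z t \<omega>) \<partial>P) = (\<integral>\<omega>. (\<integral>z. f (\<Theta> t \<omega>, z) \<partial>\<mu> t) \<partial>P)" .
qed


abbreviation stoch_grad :: "nat \<Rightarrow> 'w \<Rightarrow> 'p"
  where "stoch_grad t \<omega> \<equiv> gl (Z t \<omega>) (\<Theta> t \<omega>)"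

lemma Lc_nonneg: "0 \<le> Lc"
  using A1_lip by (simp add: lipschitz_on_def)

lemma L_nonneg: "0 \<le> L \<theta>"
  unfolding L_def using pstar_nonneg loss_nonneg by (intro integral_nonneg_AE AE_I2) simp

lemma expectation_norm_stoch_grad_le:
  shows "integrable P (\<lambda>\<omega>. (norm (stoch_grad t \<omega>))\<^sup>2)"
    and "(\<integral>\<omega>. (norm (stoch_grad t \<omega>))\<^sup>2 \<partial>P) \<le> G"
proof -
  interpret P: prob_space P
    by (rule prob)
  have "(\<lambda>x. ennreal ((norm (gl (snd x) (fst x)))\<^sup>2)) \<in> borel_measurable (borel \<Otimes>\<^sub>M Mz)"
    by measurable
  from nn_integral_Theta_Z[OF this, of t]
  have "(\<integral>\<^sup>+\<omega>. ennreal ((norm (stoch_grad t \<omega>))\<^sup>2) \<partial>P)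
      = (\<integral>\<^sup>+\<omega>. (\<integral>\<^sup>+z. ennreal ((norm (gl z (\<Theta> t \<omega>)))\<^sup>2) \<partial>\<mu> t) \<partial>P)"
    by simp
  also have "\<dots> \<le> (\<integral>\<^sup>+\<omega>. ennreal G \<partial>P)"
    by (intro nn_integral_mono nn_integral_norm_gl_le)
  also have "\<dots> = ennreal G"
    by (simp add: P.emeasure_space_1)
  finally have "(\<integral>\<^sup>+\<omega>. ennreal ((norm (stoch_grad t \<omega>))\<^sup>2) \<partial>P) \<le> ennreal G" .
  from integrable_power2_of_nn_integral_le[OF _ this G_nonneg]
  show "integrable P (\<lambda>\<omega>. (norm (stoch_grad t \<omega>))\<^sup>2)"
    and "(\<integral>\<omega>. (norm (stoch_grad t \<omega>))\<^sup>2 \<partial>P) \<le> G"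
    by simp_all
qed

lemma integrable_norm_gradL_Theta: "integrable P (\<lambda>\<omega>. (norm (gradL (\<Theta> t \<omega>)))\<^sup>2)"
proof -
  interpret P: prob_space P
    by (rule prob)
  show ?thesis
    by (rule P.integrable_const_bound[where B=G]) (simp_all add: norm_gradL_le)
qed

lemma abs_inner_gradL_le: "\<bar>gradL \<theta> \<bullet> v\<bar> \<le> (G + (norm v)\<^sup>2) / 2"
proof -
  have "\<bar>gradL \<theta> \<bullet> v\<bar> \<le> norm (gradL \<theta>) * norm v"
    by (rule Cauchy_Schwarz_ineq2)
  also have "\<dots> \<le> ((norm (gradL \<theta>))\<^sup>2 + (norm v)\<^sup>2) / 2"
    using sum_squares_bound[of "norm (gradL \<theta>)" "norm v"] by simp
  also have "\<dots> \<le> (G + (norm v)\<^sup>2) / 2"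
    using norm_gradL_le[of \<theta>] by simp
  finally show ?thesis .
qed

lemma expectation_inner_gradL_stoch_grad:
  shows "integrable P (\<lambda>\<omega>. gradL (\<Theta> t \<omega>) \<bullet> stoch_grad t \<omega>)"
    and "(\<integral>\<omega>. (norm (gradL (\<Theta> t \<omega>)))\<^sup>2 \<partial>P) - G * sqrt (2 * c t)
      \<le> (\<integral>\<omega>. gradL (\<Theta> t \<omega>) \<bullet> stoch_grad t \<omega> \<partial>P)"
proof -
  interpret P: prob_space P
    by (rule prob)
  show int: "integrable P (\<lambda>\<omega>. gradL (\<Theta> t \<omega>) \<bullet> stoch_grad t \<omega>)"
  proof (rule Bochner_Integration.integrable_bound[where f="\<lambda>\<omega>. (G + (norm (stoch_grad t \<omega>))\<^sup>2) / 2"])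
    show "integrable P (\<lambda>\<omega>. (G + (norm (stoch_grad t \<omega>))\<^sup>2) / 2)"
      using expectation_norm_stoch_grad_le(1)
      by (intro integrable_divide Bochner_Integration.integrable_add P.integrable_const)
    show "AE \<omega> in P. norm (gradL (\<Theta> t \<omega>) \<bullet> stoch_grad t \<omega>) \<le> norm ((G + (norm (stoch_grad t \<omega>))\<^sup>2) / 2)"
      using abs_inner_gradL_le G_nonneg by (intro AE_I2) simp
  qed measurable
  have "(\<lambda>x. gradL (fst x) \<bullet> gl (snd x) (fst x)) \<in> borel_measurable (borel \<Otimes>\<^sub>M Mz)"
    by measurable
  note Z_integral = integral_Theta_Z[OF this, of t, simplified, OF int]
  have "(\<integral>\<omega>. (norm (gradL (\<Theta> t \<omega>)))\<^sup>2 - G * sqrt (2 * c t) \<partial>P)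
      \<le> (\<integral>\<omega>. (\<integral>z. gradL (\<Theta> t \<omega>) \<bullet> gl z (\<Theta> t \<omega>) \<partial>\<mu> t) \<partial>P)"
    using integrable_norm_gradL_Theta Z_integral(1) integral_inner_gradL_gl_ge
    by (intro integral_mono) auto
  also have "\<dots> = (\<integral>\<omega>. gradL (\<Theta> t \<omega>) \<bullet> stoch_grad t \<omega> \<partial>P)"
    using Z_integral(2) by simp
  finally show "(\<integral>\<omega>. (norm (gradL (\<Theta> t \<omega>)))\<^sup>2 \<partial>P) - G * sqrt (2 * c t)
      \<le> (\<integral>\<omega>. gradL (\<Theta> t \<omega>) \<bullet> stoch_grad t \<omega> \<partial>P)"
    using integrable_norm_gradL_Theta by (simp add: P.prob_space)
qed

lemma L_Theta_Suc_le:
  assumes "\<omega> \<in> space P"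
  shows "L (\<Theta> (Suc t) \<omega>) \<le> L (\<Theta> t \<omega>) - \<eta> t * (gradL (\<Theta> t \<omega>) \<bullet> stoch_grad t \<omega>)
    + Lc / 2 * (\<eta> t)\<^sup>2 * (norm (stoch_grad t \<omega>))\<^sup>2"
proof -
  have "\<Theta> (Suc t) \<omega> - \<Theta> t \<omega> = - (\<eta> t *\<^sub>R stoch_grad t \<omega>)"
    using Theta_step[OF assms] by simp
  with descent_lemma[OF A1_diff A1_lip, of "\<Theta> (Suc t) \<omega>" "\<Theta> t \<omega>"] show ?thesis
    using eta_pos[of t] by (simp add: power_mult_distrib)
qed

lemma integrable_L_Theta: "integrable P (\<lambda>\<omega>. L (\<Theta> t \<omega>))"
proof (induction t)
  case 0
  show ?case
    by (rule init_int)
next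
  case (Suc t)
  let ?bound = "\<lambda>\<omega>. L (\<Theta> t \<omega>) + \<eta> t * \<bar>gradL (\<Theta> t \<omega>) \<bullet> stoch_grad t \<omega>\<bar>
    + Lc / 2 * (\<eta> t)\<^sup>2 * (norm (stoch_grad t \<omega>))\<^sup>2"
  show ?case
  proof (rule Bochner_Integration.integrable_bound[where f="?bound"])
    show "integrable P ?bound"
      using Suc expectation_inner_gradL_stoch_grad(1)[of t] expectation_norm_stoch_grad_le(1)[of t]
      by (intro Bochner_Integration.integrable_add integrable_mult_right integrable_abs)
    show "AE \<omega> in P. norm (L (\<Theta> (Suc t) \<omega>)) \<le> norm (?bound \<omega>)"
    proof (rule AE_I2)
      fix \<omega>
      assume "\<omega> \<in> space P"
      have "- (\<eta> t * (gradL (\<Theta> t \<omega>) \<bullet> stoch_grad t \<omega>)) \<le> \<eta> t * \<bar>gradL (\<Theta> t \<omega>) \<bullet> stoch_grad t \<omega>\<bar>"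
        using eta_pos[of t] by (simp add: abs_mult[symmetric] abs_if)
      with L_Theta_Suc_le[OF \<open>\<omega> \<in> space P\<close>, of t] L_nonneg[of "\<Theta> (Suc t) \<omega>"]
      show "norm (L (\<Theta> (Suc t) \<omega>)) \<le> norm (?bound \<omega>)"
        by simp
    qed
  qed measurable
qed

lemma expectation_descent_step:
  "\<eta> t * (\<integral>\<omega>. (norm (gradL (\<Theta> t \<omega>)))\<^sup>2 \<partial>P)
    \<le> (\<integral>\<omega>. L (\<Theta> t \<omega>) \<partial>P) - (\<integral>\<omega>. L (\<Theta> (Suc t) \<omega>) \<partial>P)
      + G * (\<eta> t * (sqrt (2 * c t) + Lc * \<eta> t / 2))"
proof -
  note int = integrable_L_Theta[of t] expectation_inner_gradL_stoch_grad(1)[of t]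
    expectation_norm_stoch_grad_le(1)[of t]
  have "(\<integral>\<omega>. L (\<Theta> (Suc t) \<omega>) \<partial>P)
      \<le> (\<integral>\<omega>. L (\<Theta> t \<omega>) - \<eta> t * (gradL (\<Theta> t \<omega>) \<bullet> stoch_grad t \<omega>)
          + Lc / 2 * (\<eta> t)\<^sup>2 * (norm (stoch_grad t \<omega>))\<^sup>2 \<partial>P)"
    using integrable_L_Theta[of "Suc t"] int L_Theta_Suc_le by (intro integral_mono) auto
  also have "\<dots> = (\<integral>\<omega>. L (\<Theta> t \<omega>) \<partial>P) - \<eta> t * (\<integral>\<omega>. gradL (\<Theta> t \<omega>) \<bullet> stoch_grad t \<omega> \<partial>P)
      + Lc / 2 * (\<eta> t)\<^sup>2 * (\<integral>\<omega>. (norm (stoch_grad t \<omega>))\<^sup>2 \<partial>P)"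
    using int by simp
  also have "\<dots> \<le> (\<integral>\<omega>. L (\<Theta> t \<omega>) \<partial>P)
      - \<eta> t * ((\<integral>\<omega>. (norm (gradL (\<Theta> t \<omega>)))\<^sup>2 \<partial>P) - G * sqrt (2 * c t)) + Lc / 2 * (\<eta> t)\<^sup>2 * G"
    using expectation_inner_gradL_stoch_grad(2)[of t] expectation_norm_stoch_grad_le(2)[of t]
      eta_pos[of t] Lc_nonneg
    by (intro add_mono diff_mono mult_left_mono) simp_all
  finally show ?thesis
    by (simp add: algebra_simps power2_eq_square)
qed

lemma sum_expectation_gradL_le:
  "(\<Sum>t\<le>T. \<eta> t * (\<integral>\<omega>. (norm (gradL (\<Theta> t \<omega>)))\<^sup>2 \<partial>P))
    \<le> (\<integral>\<omega>. L (\<Theta> 0 \<omega>) \<partial>P) + G * (\<Sum>t\<le>T. \<eta> t * (sqrt (2 * c t) + Lc * \<eta> t / 2))"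
proof -
  let ?EL = "\<lambda>t. \<integral>\<omega>. L (\<Theta> t \<omega>) \<partial>P"
  have "(\<Sum>t\<le>T. \<eta> t * (\<integral>\<omega>. (norm (gradL (\<Theta> t \<omega>)))\<^sup>2 \<partial>P))
      \<le> (\<Sum>t\<le>T. ?EL t - ?EL (Suc t) + G * (\<eta> t * (sqrt (2 * c t) + Lc * \<eta> t / 2)))"
    by (intro sum_mono expectation_descent_step)
  also have "\<dots> = ?EL 0 - ?EL (Suc T) + G * (\<Sum>t\<le>T. \<eta> t * (sqrt (2 * c t) + Lc * \<eta> t / 2))"
    using sum_telescope[of ?EL T] by (simp add: sum.distrib sum_distrib_left)
  also have "\<dots> \<le> ?EL 0 + G * (\<Sum>t\<le>T. \<eta> t * (sqrt (2 * c t) + Lc * \<eta> t / 2))"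
    using integral_nonneg_AE[of "\<lambda>\<omega>. L (\<Theta> (Suc T) \<omega>)" P] L_nonneg by simp
  finally show ?thesis .
qed

lemma step_bound_nonneg: "0 \<le> \<eta> t * (sqrt (2 * c t) + Lc * \<eta> t / 2)"
  using eta_pos[of t] c_nonneg[of t] Lc_nonneg by (intro mult_nonneg_nonneg add_nonneg_nonneg) auto

lemma summable_step_bound: "summable (\<lambda>t. \<eta> t * (sqrt (2 * c t) + Lc * \<eta> t / 2))"
proof (rule summable_comparison_test')
  show "summable (\<lambda>t. ((\<eta> t)\<^sup>2 + 2 * c t) / 2 + Lc / 2 * (\<eta> t)\<^sup>2)"
    using A2_sq A4 by (intro summable_add summable_divide summable_mult) auto
  fix t
  have "\<eta> t * sqrt (2 * c t) \<le> ((\<eta> t)\<^sup>2 + (sqrt (2 * c t))\<^sup>2) / 2"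
    using sum_squares_bound[of "\<eta> t" "sqrt (2 * c t)"] by simp
  then show "norm (\<eta> t * (sqrt (2 * c t) + Lc * \<eta> t / 2)) \<le> ((\<eta> t)\<^sup>2 + 2 * c t) / 2 + Lc / 2 * (\<eta> t)\<^sup>2"
    using eta_pos[of t] c_nonneg[of t] Lc_nonneg by (simp add: algebra_simps power2_eq_square)
qed

lemma summable_expectation_gradL: "summable (\<lambda>t. \<eta> t * (\<integral>\<omega>. (norm (gradL (\<Theta> t \<omega>)))\<^sup>2 \<partial>P))"
proof (rule summableI_nonneg_bounded)
  let ?b = "\<lambda>t. \<eta> t * (sqrt (2 * c t) + Lc * \<eta> t / 2)"
  show "0 \<le> \<eta> t * (\<integral>\<omega>. (norm (gradL (\<Theta> t \<omega>)))\<^sup>2 \<partial>P)" for t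
    using eta_pos[of t] by (simp add: integral_nonneg_AE)
  show "(\<Sum>t<n. \<eta> t * (\<integral>\<omega>. (norm (gradL (\<Theta> t \<omega>)))\<^sup>2 \<partial>P)) \<le> (\<integral>\<omega>. L (\<Theta> 0 \<omega>) \<partial>P) + G * suminf ?b"
    for n
  proof (cases n)
    case 0
    have "0 \<le> suminf ?b"
      using summable_step_bound step_bound_nonneg by (rule suminf_nonneg)
    then show ?thesis
      using 0 G_nonneg L_nonneg by (simp add: integral_nonneg_AE)
  next
    case (Suc m)
    have partial_le: "(\<Sum>t\<le>m. ?b t) \<le> suminf ?b"
      using summable_step_bound by (rule sum_le_suminf) (simp_all add: step_bound_nonneg)
    have "(\<Sum>t<n. \<eta> t * (\<integral>\<omega>. (norm (gradL (\<Theta> t \<omega>)))\<^sup>2 \<partial>P))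
        = (\<Sum>t\<le>m. \<eta> t * (\<integral>\<omega>. (norm (gradL (\<Theta> t \<omega>)))\<^sup>2 \<partial>P))"
      using Suc lessThan_Suc_atMost by simp
    also have "\<dots> \<le> (\<integral>\<omega>. L (\<Theta> 0 \<omega>) \<partial>P) + G * (\<Sum>t\<le>m. ?b t)"
      by (rule sum_expectation_gradL_le)
    also have "\<dots> \<le> (\<integral>\<omega>. L (\<Theta> 0 \<omega>) \<partial>P) + G * suminf ?b"
      using mult_left_mono[OF partial_le G_nonneg] by simp
    finally show ?thesis .
  qed
qed

end

theorem proposition1:
  fixes Mz :: "'z measure"                 \<comment> \<open>base measure dz on the sample space Z\<close>
    and P :: "'w measure"                  \<comment> \<open>underlying probability space\<close>
    and loss :: "'z \<Rightarrow> 'p::euclidean_space \<Rightarrow> real"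
    and gl :: "'z \<Rightarrow> 'p \<Rightarrow> 'p"        \<comment> \<open>gradient of the loss in the parameter\<close>
    and p :: "nat \<Rightarrow> 'z \<Rightarrow> real" and pstar :: "'z \<Rightarrow> real"
    and c :: "nat \<Rightarrow> real"
    and L :: "'p \<Rightarrow> real" and gradL :: "'p \<Rightarrow> 'p" and Lc :: real
    and \<eta> :: "nat \<Rightarrow> real" and G :: real
    and Z :: "nat \<Rightarrow> 'w \<Rightarrow> 'z" and \<Theta> :: "nat \<Rightarrow> 'w \<Rightarrow> 'p"
  assumes prob: "prob_space P"
    and loss_nonneg: "\<And>z \<theta>. z \<in> space Mz \<Longrightarrow> loss z \<theta> \<ge> 0"
    and loss_meas: "(\<lambda>(z, \<theta>). loss z \<theta>) \<in> borel_measurable (Mz \<Otimes>\<^sub>M borel)"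
    and gl_meas: "(\<lambda>(z, \<theta>). gl z \<theta>) \<in> borel_measurable (Mz \<Otimes>\<^sub>M borel)"
    and loss_diff: "\<And>z \<theta>. z \<in> space Mz \<Longrightarrow>
                      (loss z has_derivative (\<lambda>h. gl z \<theta> \<bullet> h)) (at \<theta>)"
    and p_meas: "\<And>t. p t \<in> borel_measurable Mz"
    and p_nonneg: "\<And>t z. z \<in> space Mz \<Longrightarrow> p t z \<ge> 0"
    and p_int: "\<And>t. integrable Mz (p t)"
    and p_one: "\<And>t. (\<integral>z. p t z \<partial>Mz) = 1"
    and pstar_meas: "pstar \<in> borel_measurable Mz"
    and pstar_nonneg: "\<And>z. z \<in> space Mz \<Longrightarrow> pstar z \<ge> 0"
    and pstar_int: "integrable Mz pstar"
    and pstar_one: "(\<integral>z. pstar z \<partial>Mz) = 1"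
    and c_def: "\<And>t. c t = (\<integral>z. \<bar>p t z - pstar z\<bar> \<partial>Mz)"
    and L_integrable: "\<And>\<theta>. integrable Mz (\<lambda>z. pstar z * loss z \<theta>)"
    and L_def: "\<And>\<theta>. L \<theta> = (\<integral>z. pstar z * loss z \<theta> \<partial>Mz)"
    and Z_meas: "\<And>t. Z t \<in> measurable P Mz"
    and Theta0_meas: "\<Theta> 0 \<in> borel_measurable P"
    and Z_cond: "\<And>t C A. C \<in> sets (borel \<Otimes>\<^sub>M (\<Pi>\<^sub>M i\<in>{..<t}. Mz)) \<Longrightarrow> A \<in> sets Mz \<Longrightarrow>
                   measure P {\<omega> \<in> space P. (\<Theta> 0 \<omega>, \<lambda>i\<in>{..<t}. Z i \<omega>) \<in> C \<and> Z t \<omega> \<in> A}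
                 = measure P {\<omega> \<in> space P. (\<Theta> 0 \<omega>, \<lambda>i\<in>{..<t}. Z i \<omega>) \<in> C}
                   * measure (density Mz (p t)) A"
    and Theta_step: "\<And>t \<omega>. \<omega> \<in> space P \<Longrightarrow>
                      \<Theta> (Suc t) \<omega> = \<Theta> t \<omega> - \<eta> t *\<^sub>R gl (Z t \<omega>) (\<Theta> t \<omega>)"
    and eta_pos: "\<And>t. \<eta> t > 0"
    and A1_diff: "\<And>\<theta>. (L has_derivative (\<lambda>h. gradL \<theta> \<bullet> h)) (at \<theta>)"
    and A1_lip: "Lc-lipschitz_on UNIV gradL"
    and A2_div: "\<not> summable \<eta>"
    and A2_sq: "summable (\<lambda>t. (\<eta> t)\<^sup>2)"
    and A3_pos: "G > 0"
    and A3: "\<And>t \<theta>. (\<integral>\<^sup>+ z. ennreal (p t z * (norm (gl z \<theta>))\<^sup>2) \<partial>Mz) \<le> ennreal G"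
    and A4: "summable c"
    and init_int: "integrable P (\<lambda>\<omega>. L (\<Theta> 0 \<omega>))"
  shows "(\<forall>t. integrable P (\<lambda>\<omega>. (norm (gradL (\<Theta> t \<omega>)))\<^sup>2))
       \<and> (\<forall>T. (\<Sum>t\<le>T. \<eta> t * (\<integral>\<omega>. (norm (gradL (\<Theta> t \<omega>)))\<^sup>2 \<partial>P))
               \<le> (\<integral>\<omega>. L (\<Theta> 0 \<omega>) \<partial>P)
                 + G * (\<Sum>t\<le>T. \<eta> t * (sqrt (2 * c t) + Lc * \<eta> t / 2)))
       \<and> summable (\<lambda>t. \<eta> t * (\<integral>\<omega>. (norm (gradL (\<Theta> t \<omega>)))\<^sup>2 \<partial>P))
       \<and> summable (\<lambda>t. \<eta> t * (sqrt (2 * c t) + Lc * \<eta> t / 2))"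
proof -
  interpret sgd Mz P loss gl p pstar c L gradL Lc \<eta> G Z \<Theta>
    by (rule sgd.intro) (fact assms)+
  show ?thesis
    using integrable_norm_gradL_Theta sum_expectation_gradL_le summable_expectation_gradL
      summable_step_bound
    by blast
qed

end
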